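(* For every behavior $r$, $\partial(\partial_{\simeq} r)\simeq\partial_{\simeq} r$, where $\simeq$ is applied to sets of behaviors as defined below.
   Context: Let $\Sigma$ be a finite alphabet. Behaviors are the terms generated by $r,s ::= \phi \mid \varepsilon \mid x\ (x\in\Sigma) \mid r+s \mid r\cdot s \mid r^* \mid \mathrm{fork}(r)$. The concurrent part $\mathcal C(r)$ is the behavior defined by: $\mathcal C(\phi)=\phi$, $\mathcal C(\varepsilon)=\varepsilon$, $\mathcal C(x)=\phi$, $\mathcal C(r+s)=\mathcal C(r)+\mathcal C(s)$, $\mathcal C(r\cdot s)=\mathcal C(r)\cdot\mathcal C(s)$, $\mathcal C(r^* )=\mathcal C(r)^*$, $\mathcal C(\mathrm{fork}(r))=\mathrm{fork}(r)$. The derivative $\partial_x r$ of a behavior $r$ by $x\in\Sigma$ is the behavior defined by: $\partial_x\phi=\phi$, $\partial_x\varepsilon=\phi$, $\partial_x y=\varepsilon$ if $y=x$ and $\phi$ otherwise, $\partial_x(r+s)=\partial_x r+\partial_x s$, $\partial_x(r\cdot s)=\partial_x r\cdot s+\mathcal C(r)\cdot\partial_x s$, $\partial_x(r^* )=\partial_x r\cdot r^*$, $\partial_x(\mathrm{fork}(r))=\mathrm{fork}(\partial_x r)$; it is extended to words by $\partial_\varepsilon r=r$ and $\partial_{xw}r=\partial_w(\partial_x r)$. A descendant of $r$ is any behavior $\partial_w r$ with $w\in\Sigma^*$; $\partial r$ denotes the set of descendants of $r$, and for a set $R$, $\partial R=\bigcup_{r\in R}\partial r$. Similarity $\simeq$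 is the smallest relation on behaviors that is reflexive, symmetric, transitive, closed under contexts (if $s\simeq t$ then $E[s]\simeq E[t]$ for every context $E ::= [\,] \mid E^* \mid E\cdot s \mid r\cdot E \mid E+s \mid r+E \mid \mathrm{fork}(E)$, where $E[t]$ replaces the hole by $t$), and contains the axioms $r+(s+t)\simeq(r+s)+t$, $r+s\simeq s+r$, $r+r\simeq r$, $r+\phi\simeq r$, $\phi+r\simeq r$, $\varepsilon\cdot r\simeq r$, $r\cdot\varepsilon\simeq r$, $\varepsilon^*\simeq\varepsilon$, $\mathrm{fork}(\varepsilon)\simeq\varepsilon$, $\phi\cdot r\simeq\phi$, $r\cdot\phi\simeq\phi$, $\phi^*\simeq\varepsilon$, $\mathrm{fork}(\phi)\simeq\phi$. For sets of behaviors, $R\simeq S$ iff every $r\in R$ is similar to some $s\in S$ and every $s\in S$ is similar to some $r\in R$. The set of dissimilar descendants $\partial_{\simeq} r$ is a set containing exactly one (arbitrarily chosen) representative of each $\simeq$-equivalence class of elements of $\partial r$. *)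

theory Defs
  imports Main
begin

datatype 'a beh = Phi | Eps | Sym 'a | Plus "'a beh" "'a beh" | Seq "'a beh" "'a beh"
  | Star "'a beh" | Fork "'a beh"

fun conc :: "'a beh \<Rightarrow> 'a beh" where
  "conc Phi = Phi"
| "conc Eps = Eps"
| "conc (Sym x) = Phi"
| "conc (Plus r s) = Plus (conc r) (conc s)"
| "conc (Seq r s) = Seq (conc r) (conc s)"
| "conc (Star r) = Star (conc r)"
| "conc (Fork r) = Fork r"

fun deriv :: "'a \<Rightarrow> 'a beh \<Rightarrow> 'a beh" where
  "deriv x Phi = Phi"
| "deriv x Eps = Phi"
| "deriv x (Sym y) = (if y = x then Eps else Phi)"
| "deriv x (Plus r s) = Plus (deriv x r) (deriv x s)"
| "deriv x (Seq r s) = Plus (Seq (deriv x r) s) (Seq (conc r) (deriv x s))"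
| "deriv x (Star r) = Seq (deriv x r) (Star r)"
| "deriv x (Fork r) = Fork (deriv x r)"

fun derivw :: "'a list \<Rightarrow> 'a beh \<Rightarrow> 'a beh" where
  "derivw [] r = r"
| "derivw (x # w) r = derivw w (deriv x r)"

definition descendants :: "'a beh \<Rightarrow> 'a beh set" where
  "descendants r = {derivw w r | w. True}"

definition descendants_set :: "'a beh set \<Rightarrow> 'a beh set" where
  "descendants_set R = (\<Union>r\<in>R. descendants r)"

datatype 'a ctx = Hole | CStar "'a ctx" | CSeqL "'a ctx" "'a beh" | CSeqR "'a beh" "'a ctx"
  | CPlusL "'a ctx" "'a beh" | CPlusR "'a beh" "'a ctx" | CFork "'a ctx"

fun fill :: "'a ctx \<Rightarrow> 'a beh \<Rightarrow> 'a beh" where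
  "fill Hole t = t"
| "fill (CStar E) t = Star (fill E t)"
| "fill (CSeqL E s) t = Seq (fill E t) s"
| "fill (CSeqR r E) t = Seq r (fill E t)"
| "fill (CPlusL E s) t = Plus (fill E t) s"
| "fill (CPlusR r E) t = Plus r (fill E t)"
| "fill (CFork E) t = Fork (fill E t)"

inductive sim :: "'a beh \<Rightarrow> 'a beh \<Rightarrow> bool" (infix "\<simeq>" 50) where
  sim_refl: "r \<simeq> r"
| sim_sym: "s \<simeq> t \<Longrightarrow> t \<simeq> s"
| sim_trans: "r \<simeq> s \<Longrightarrow> s \<simeq> t \<Longrightarrow> r \<simeq> t"
| sim_ctx: "s \<simeq> t \<Longrightarrow> fill E s \<simeq> fill E t"
| ax_assoc: "Plus r (Plus s t) \<simeq> Plus (Plus r s) t"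
| ax_comm: "Plus r s \<simeq> Plus s r"
| ax_idem: "Plus r r \<simeq> r"
| ax_plus_phi_r: "Plus r Phi \<simeq> r"
| ax_plus_phi_l: "Plus Phi r \<simeq> r"
| ax_seq_eps_l: "Seq Eps r \<simeq> r"
| ax_seq_eps_r: "Seq r Eps \<simeq> r"
| ax_star_eps: "Star Eps \<simeq> Eps"
| ax_fork_eps: "Fork Eps \<simeq> Eps"
| ax_seq_phi_l: "Seq Phi r \<simeq> Phi"
| ax_seq_phi_r: "Seq r Phi \<simeq> Phi"
| ax_star_phi: "Star Phi \<simeq> Eps"
| ax_fork_phi: "Fork Phi \<simeq> Phi"

definition sim_set :: "'a beh set \<Rightarrow> 'a beh set \<Rightarrow> bool" where
  "sim_set R S \<longleftrightarrow> (\<forall>r\<in>R. \<exists>s\<in>S. r \<simeq> s) \<and> (\<forall>s\<in>S. \<exists>r\<in>R. r \<simeq> s)"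

definition is_dissim_desc :: "'a beh \<Rightarrow> 'a beh set \<Rightarrow> bool" where
  "is_dissim_desc r D \<longleftrightarrow> D \<subseteq> descendants r
     \<and> (\<forall>s\<in>descendants r. \<exists>d\<in>D. s \<simeq> d)
     \<and> (\<forall>d1\<in>D. \<forall>d2\<in>D. d1 \<simeq> d2 \<longrightarrow> d1 = d2)"

end

theory Submission
  imports Defs
begin

text \<open>Descendants of descendants of r are descendants of r, so each of them is similar to
  a representative in D; conversely every element of D is its own descendant.\<close>

lemma derivw_append: "derivw (u @ v) r = derivw v (derivw u r)"
  by (induction u arbitrary: r) auto

lemma descendants_self: "r \<in> descendants r"
  unfolding descendants_def by (auto intro: exI[of _ "[]"])

lemma descendants_trans: "s \<in> descendants r \<Longrightarrow> t \<in> descendants s \<Longrightarrow> t \<in> descendants r"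
  unfolding descendants_def by (auto simp: derivw_append[symmetric])

lemma descendants_set_subset:
  assumes "R \<subseteq> descendants r"
  shows "descendants_set R \<subseteq> descendants r"
  using assms descendants_trans unfolding descendants_set_def by blast

lemma subset_descendants_set: "R \<subseteq> descendants_set R"
  unfolding descendants_set_def using descendants_self by blast

theorem lemma12:
  fixes r :: "'a::finite beh" and D :: "'a beh set"
  assumes "is_dissim_desc r D"
  shows "sim_set (descendants_set D) D"
proof -
  have D_desc: "D \<subseteq> descendants r" and D_covers: "\<forall>s\<in>descendants r. \<exists>d\<in>D. s \<simeq> d"
    using assms unfolding is_dissim_desc_def by auto
  have "\<forall>t\<in>descendants_set D. \<exists>d\<in>D. t \<simeq> d"
    using descendants_set_subset[OF D_desc] D_covers by blast
  moreover have "\<forall>d\<in>D. \<exists>t\<in>descendants_set D. t \<simeq> d"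
    using subset_descendants_set sim_refl by blast
  ultimately show ?thesis
    unfolding sim_set_def by blast
qed

end
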